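(* There is a constant $c>0$ such that for every positive integer $n$, \[\tfrac54 n-c\sqrt n\;\le\; st_{\mathcal{S}}(n)\;\le\; 2n-\sqrt n .\]
   Context: For a finite set $P$ of points in the plane, no two of which share an $x$-coordinate or a $y$-coordinate, $st_{\mathcal{S}}(P)$ is the minimum of $|W|$ over finite point sets $W$ such that no two distinct points of $P\cup W$ share an $x$-coordinate or a $y$-coordinate and every axis-parallel square whose boundary contains two distinct points of $P$ has a point of $W$ in its interior (equivalently, the $L_\infty$ witness Delaunay graph $\mathrm{SG}^-(P,W)$, in which distinct $p,q\in P$ are adjacent iff some axis-parallel square with $p,q$ on its boundary has no point of $W$ in its interior, has no edges). Define $st_{\mathcal{S}}(n)=\max\{st_{\mathcal{S}}(P): |P|=n\}$, the maximum over such sets $P$ of $n$ points. *)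

theory Defs
  imports Complex_Main
begin

type_synonym pt = "real \<times> real"

definition gen_pos :: "pt set \<Rightarrow> bool" where
  "gen_pos S \<longleftrightarrow> (\<forall>p\<in>S. \<forall>q\<in>S. p \<noteq> q \<longrightarrow> fst p \<noteq> fst q \<and> snd p \<noteq> snd q)"

definition sq_closed :: "real \<Rightarrow> real \<Rightarrow> real \<Rightarrow> pt set" where
  "sq_closed a b s = {(x, y). a \<le> x \<and> x \<le> a + s \<and> b \<le> y \<and> y \<le> b + s}"

definition sq_interior :: "real \<Rightarrow> real \<Rightarrow> real \<Rightarrow> pt set" where
  "sq_interior a b s = {(x, y). a < x \<and> x < a + s \<and> b < y \<and> y < b + s}"

definition sq_boundary :: "real \<Rightarrow> real \<Rightarrow> real \<Rightarrow> pt set" where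
  "sq_boundary a b s = sq_closed a b s - sq_interior a b s"

definition is_witness_set :: "pt set \<Rightarrow> pt set \<Rightarrow> bool" where
  "is_witness_set P W \<longleftrightarrow> finite W \<and> gen_pos (P \<union> W) \<and>
     (\<forall>p\<in>P. \<forall>q\<in>P. \<forall>a b s. p \<noteq> q \<and> s > 0 \<and> p \<in> sq_boundary a b s \<and> q \<in> sq_boundary a b s
        \<longrightarrow> (\<exists>w\<in>W. w \<in> sq_interior a b s))"

definition st_S :: "pt set \<Rightarrow> nat" where
  "st_S P = (LEAST k. \<exists>W. is_witness_set P W \<and> card W = k)"

definition st_S_n :: "nat \<Rightarrow> nat" where
  "st_S_n n = Max {st_S P | P. finite P \<and> card P = n \<and> gen_pos P}"

end

theory Submission
  imports Defs
begin

text \<open>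
  Among the points of P, ordered by the north-east dominance order, there
  is an antichain A and a chain C with |P| <= |A| |C| (a Dilworth/Mirsky-type product
  bound, proved for any finite strict order with a monotone rank).  Every pair of points
  is related either north-east or south-east.  For each of the two orders we place one
  tiny translate of every point, leaving out the points of A (resp. of C, which is a
  south-east antichain); each related pair then has a translate strictly inside its
  bounding box, and such a point lies in the interior of every square having both points
  on its boundary.  This uses 2|P| - |A| - |C| <= 2|P| - sqrt |P| witnesses.

  For two interleaved descending diagonals of n points we exhibit about
  5n/4 squares with pairwise disjoint interiors, each with two of the points on its
  boundary; every witness set needs a distinct point in each of them.
\<close>

definition north_east :: "pt \<Rightarrow> pt \<Rightarrow> bool" where
  "north_east p q \<longleftrightarrow> fst p < fst q \<and> snd p < snd q"

definition south_east :: "pt \<Rightarrow> pt \<Rightarrow> bool" where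
  "south_east p q \<longleftrightarrow> fst p < fst q \<and> snd q < snd p"

definition antichain_wrt :: "('a \<Rightarrow> 'a \<Rightarrow> bool) \<Rightarrow> 'a set \<Rightarrow> bool" where
  "antichain_wrt R A \<longleftrightarrow> (\<forall>a\<in>A. \<forall>b\<in>A. \<not> R a b)"

definition chain_wrt :: "('a \<Rightarrow> 'a \<Rightarrow> bool) \<Rightarrow> 'a set \<Rightarrow> bool" where
  "chain_wrt R C \<longleftrightarrow> (\<forall>a\<in>C. \<forall>b\<in>C. a \<noteq> b \<longrightarrow> R a b \<or> R b a)"

lemma transp_north_east: "transp north_east"
  unfolding transp_def north_east_def by auto

lemma transp_south_east: "transp south_east"
  unfolding transp_def south_east_def by auto

lemma ne_chain_is_se_antichain: "chain_wrt north_east C \<Longrightarrow> antichain_wrt south_east C"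
  unfolding chain_wrt_def antichain_wrt_def north_east_def south_east_def by fastforce

section \<open>A Dilworth-type product bound\<close>

lemma max_rank_element:
  fixes f :: "'a \<Rightarrow> 'b::linorder"
  assumes "finite S" "S \<noteq> {}"
  shows "\<exists>m\<in>S. \<forall>x\<in>S. f x \<le> f m"
proof -
  have "Max (f ` S) \<in> f ` S" using assms by simp
  then obtain m where "m \<in> S" "f m = Max (f ` S)" by auto
  moreover have "f x \<le> Max (f ` S)" if "x \<in> S" for x
    using assms(1) that by simp
  ultimately show ?thesis by metis
qed

definition maximal_in :: "('a \<Rightarrow> 'a \<Rightarrow> bool) \<Rightarrow> 'a set \<Rightarrow> 'a set" where
  "maximal_in R P = {p \<in> P. \<forall>q\<in>P. \<not> R p q}"

lemma maximal_in_antichain: "antichain_wrt R (maximal_in R P)"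
  unfolding antichain_wrt_def maximal_in_def by auto

lemma maximal_in_nonempty:
  fixes f :: "'a \<Rightarrow> 'b::linorder"
  assumes rank: "\<And>x y. R x y \<Longrightarrow> f x < f y" and "finite P" "P \<noteq> {}"
  shows "maximal_in R P \<noteq> {}"
proof -
  obtain p where p: "p \<in> P" "\<And>x. x \<in> P \<Longrightarrow> f x \<le> f p"
    using max_rank_element[of _ f, OF assms(2,3)] by blast
  have "\<not> R p q" if "q \<in> P" for q
    using p(2)[OF that] rank[of p q] by auto
  thus ?thesis using p(1) unfolding maximal_in_def by blast
qed

text \<open>A nonempty chain avoiding the maximal elements lies below a single maximal element:
  take a rank-maximal element above the top of the chain.\<close>

lemma chain_below_maximal:
  fixes f :: "'a \<Rightarrow> 'b::linorder"
  assumes R_trans: "transp R"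
    and rank: "\<And>x y. R x y \<Longrightarrow> f x < f y"
    and fin: "finite P" and chain: "chain_wrt R C" and ne: "C \<noteq> {}"
    and below: "C \<subseteq> P - maximal_in R P"
  shows "\<exists>m \<in> maximal_in R P. \<forall>c\<in>C. R c m"
proof -
  have CP: "C \<subseteq> P" using below by blast
  obtain top where top: "top \<in> C" "\<And>x. x \<in> C \<Longrightarrow> f x \<le> f top"
    using max_rank_element[of _ f, OF finite_subset[OF CP fin] ne] by blast
  have below_top: "c = top \<or> R c top" if "c \<in> C" for c
  proof (rule ccontr)
    assume "\<not> (c = top \<or> R c top)"
    hence "R top c" using chain top(1) that unfolding chain_wrt_def by blast
    thus False using rank[of top c] top(2)[OF that] by simp
  qed
  define S where "S = {q \<in> P. R top q}"
  have "S \<noteq> {}" using below top(1) unfolding S_def maximal_in_def by blast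
  moreover have "finite S" using fin unfolding S_def by simp
  ultimately obtain m where m: "m \<in> S" "\<And>x. x \<in> S \<Longrightarrow> f x \<le> f m"
    using max_rank_element[of S f] by blast
  have "\<not> R m q" if "q \<in> P" for q
  proof
    assume "R m q"
    hence "q \<in> S" using m(1) transpD[OF R_trans] that unfolding S_def by blast
    thus False using m(2)[of q] rank[OF \<open>R m q\<close>] by simp
  qed
  hence "m \<in> maximal_in R P" using m(1) unfolding S_def maximal_in_def by simp
  moreover have "R c m" if "c \<in> C" for c
    using below_top[OF that] m(1) transpD[OF R_trans] unfolding S_def by blast
  ultimately show ?thesis by blast
qed

text \<open>Induction step of the product bound: from an antichain A' and a nonempty chain C'
  for P minus its maximal elements M, the chain C' plus one element of M and the larger
  of A' and M give the bound for P, since |P| = |P - M| + |M|.\<close>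

lemma product_bound_step:
  fixes f :: "'a \<Rightarrow> 'b::linorder"
  assumes R_trans: "transp R"
    and rank: "\<And>x y. R x y \<Longrightarrow> f x < f y"
    and fin: "finite P"
    and A': "A' \<subseteq> P - maximal_in R P" "antichain_wrt R A'"
    and C': "C' \<subseteq> P - maximal_in R P" "chain_wrt R C'" "C' \<noteq> {}"
    and bound: "card (P - maximal_in R P) \<le> card A' * card C'"
  shows "\<exists>A C. A \<subseteq> P \<and> C \<subseteq> P \<and> antichain_wrt R A \<and> chain_wrt R C \<and> card P \<le> card A * card C"
proof -
  let ?M = "maximal_in R P"
  obtain m where m: "m \<in> ?M" "\<And>c. c \<in> C' \<Longrightarrow> R c m"
    using chain_below_maximal[where R=R and f=f, OF R_trans rank fin C'(2,3,1)] by blast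
  have MP: "?M \<subseteq> P" unfolding maximal_in_def by auto
  have card_P: "card P = card (P - ?M) + card ?M"
    using card_Diff_subset[OF finite_subset[OF MP fin] MP] card_mono[OF fin MP] by simp
  have "m \<notin> C'" using m(1) C'(1) by blast
  hence card_C: "card (insert m C') = card C' + 1"
    using finite_subset[OF C'(1)] fin by simp
  have chain_C: "chain_wrt R (insert m C')"
    using C'(2) m(2) unfolding chain_wrt_def by blast
  define A where "A = (if card A' \<le> card ?M then ?M else A')"
  have "card A' \<le> card A" "card ?M \<le> card A" unfolding A_def by auto
  hence "card A' * card C' + card ?M \<le> card A * card C' + card A"
    using add_le_mono mult_le_mono1 by blast
  hence bound_P: "card P \<le> card A * card (insert m C')" using card_P card_C bound by simp
  have A: "A \<subseteq> P \<and> antichain_wrt R A"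
    using A' maximal_in_antichain MP unfolding A_def by (cases "card A' \<le> card ?M") auto
  have C: "insert m C' \<subseteq> P" using m(1) MP C'(1) by blast
  show ?thesis
    by (rule exI[of _ A], rule exI[of _ "insert m C'"]) (use bound_P A C chain_C in simp)
qed

text \<open>Induction on P: remove the
  antichain of maximal elements.\<close>

lemma antichain_chain_product:
  fixes f :: "'a \<Rightarrow> 'b::linorder"
  assumes R_trans: "transp R"
    and rank: "\<And>x y. R x y \<Longrightarrow> f x < f y"
    and "finite P"
  shows "\<exists>A C. A \<subseteq> P \<and> C \<subseteq> P \<and> antichain_wrt R A \<and> chain_wrt R C \<and> card P \<le> card A * card C"
  using \<open>finite P\<close>
proof (induction P rule: finite_psubset_induct)
  case (psubset P)
  let ?M = "maximal_in R P"
  show ?case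
  proof (cases "P = {}")
    case True
    thus ?thesis unfolding antichain_wrt_def chain_wrt_def by (intro exI[of _ "{}"]) simp
  next
    case False
    then obtain p where p: "p \<in> ?M"
      using maximal_in_nonempty[where R=R and f=f, OF rank psubset.hyps] by blast
    hence smaller: "P - ?M \<subset> P" unfolding maximal_in_def by blast
    obtain A' C' where IH: "A' \<subseteq> P - ?M" "C' \<subseteq> P - ?M" "antichain_wrt R A'"
      "chain_wrt R C'" "card (P - ?M) \<le> card A' * card C'"
      using psubset.IH[OF smaller] by blast
    show ?thesis
    proof (cases "C' = {}")
      case True
      hence "card (P - ?M) = 0" using IH(5) by simp
      hence "P \<subseteq> ?M" using psubset.hyps by simp
      moreover have MP: "?M \<subseteq> P" unfolding maximal_in_def by blast
      ultimately have bound_P: "card P \<le> card ?M * card {p}"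
        using card_mono[OF finite_subset[OF MP psubset.hyps]] by simp
      have chain_p: "chain_wrt R {p}" unfolding chain_wrt_def by simp
      show ?thesis
        by (rule exI[of _ ?M], rule exI[of _ "{p}"])
          (use bound_P MP maximal_in_antichain[of R P] p chain_p in auto)
    next
      case False
      show ?thesis by (rule product_bound_step[OF R_trans rank psubset.hyps IH(1,3,2,4) False IH(5)])
    qed
  qed
qed

section \<open>Stabbing squares by points strictly between two points\<close>

definition strictly_between :: "pt \<Rightarrow> pt \<Rightarrow> pt \<Rightarrow> bool" where
  "strictly_between p q w \<longleftrightarrow>
     min (fst p) (fst q) < fst w \<and> fst w < max (fst p) (fst q) \<and>
     min (snd p) (snd q) < snd w \<and> snd w < max (snd p) (snd q)"

lemma strictly_between_sym: "strictly_between p q w \<longleftrightarrow> strictly_between q p w"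
  unfolding strictly_between_def by (simp add: min.commute max.commute)

lemma strictly_between_interior:
  assumes "p \<in> sq_closed a b s" "q \<in> sq_closed a b s" "strictly_between p q w"
  shows "w \<in> sq_interior a b s"
  using assms unfolding sq_closed_def sq_interior_def strictly_between_def
  by (cases p, cases q, cases w) auto

lemma between_witnesses_suffice:
  assumes "finite W" "gen_pos (P \<union> W)"
    and between: "\<And>p q. p \<in> P \<Longrightarrow> q \<in> P \<Longrightarrow> p \<noteq> q \<Longrightarrow> \<exists>w\<in>W. strictly_between p q w"
  shows "is_witness_set P W"
  unfolding is_witness_set_def
proof (intro conjI assms(1,2) ballI allI impI)
  fix p q a b s
  assume "p \<in> P" "q \<in> P" and sq: "p \<noteq> q \<and> 0 < s \<and> p \<in> sq_boundary a b s \<and> q \<in> sq_boundary a b s"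
  then obtain w where "w \<in> W" "strictly_between p q w" using between by blast
  moreover have "p \<in> sq_closed a b s" "q \<in> sq_closed a b s" using sq unfolding sq_boundary_def by auto
  ultimately show "\<exists>w\<in>W. w \<in> sq_interior a b s" using strictly_between_interior by blast
qed

definition shift :: "pt \<Rightarrow> pt \<Rightarrow> pt" where
  "shift v p = (fst p + fst v, snd p + snd v)"

lemma shift_toward_between:
  assumes "0 < fst v * (fst q - fst p)" "\<bar>fst v\<bar> < \<bar>fst q - fst p\<bar>"
    and "0 < snd v * (snd q - snd p)" "\<bar>snd v\<bar> < \<bar>snd q - snd p\<bar>"
  shows "strictly_between p q (shift v p)"
  using assms unfolding strictly_between_def shift_def
  by (auto simp: zero_less_mult_iff abs_if min_def max_def split: if_splits)

section \<open>Upper bound: two witnesses per point, minus a chain and an antichain\<close>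

definition upset :: "('a \<Rightarrow> 'a \<Rightarrow> bool) \<Rightarrow> 'a set \<Rightarrow> 'a set \<Rightarrow> 'a set" where
  "upset R P A = {p \<in> P. \<exists>a\<in>A. a = p \<or> R a p}"

lemma upset_step:
  assumes R_trans: "transp R"
    and anti: "antichain_wrt R A" and p: "p \<in> upset R P A" and q: "q \<in> P" "R p q"
  shows "q \<in> upset R P A - A"
proof -
  obtain a where a: "a \<in> A" "a = p \<or> R a p" using p unfolding upset_def by blast
  hence "R a q" using q(2) transpD[OF R_trans] by blast
  moreover have "q \<notin> A" using anti a(1) calculation unfolding antichain_wrt_def by blast
  ultimately show ?thesis using q(1) a(1) unfolding upset_def by blast
qed

text \<open>Put a forward witness F p at each p outside the upset of A and a
  backward witness B q at each q of the upset not in A.  Every R-related pair p, q then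
  has a witness strictly between it: F p if p is outside the upset, B q otherwise.\<close>

lemma relation_witnesses_cover:
  assumes R_trans: "transp R"
    and anti: "antichain_wrt R A"
    and fwd: "\<And>p q. p \<in> P \<Longrightarrow> q \<in> P \<Longrightarrow> R p q \<Longrightarrow> strictly_between p q (F p)"
    and bwd: "\<And>p q. p \<in> P \<Longrightarrow> q \<in> P \<Longrightarrow> R p q \<Longrightarrow> strictly_between p q (B q)"
    and pq: "p \<in> P" "q \<in> P" "R p q"
  shows "\<exists>w \<in> F ` (P - upset R P A) \<union> B ` (upset R P A - A). strictly_between p q w"
proof (cases "p \<in> upset R P A")
  case True
  hence "q \<in> upset R P A - A" using upset_step[OF R_trans anti _ pq(2,3)] by blast
  thus ?thesis using bwd[OF pq] by blast
next
  case False
  thus ?thesis using fwd[OF pq] pq(1) by blast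
qed

lemma relation_witnesses_card:
  assumes "finite P" "A \<subseteq> P"
  shows "card (F ` (P - upset R P A) \<union> B ` (upset R P A - A)) \<le> card P - card A"
proof -
  let ?X = "upset R P A"
  have AX: "A \<subseteq> ?X" and XP: "?X \<subseteq> P" using assms(2) unfolding upset_def by auto
  have finX: "finite ?X" and finA: "finite A" using assms finite_subset XP by auto
  have "card (F ` (P - ?X) \<union> B ` (?X - A)) \<le> card (F ` (P - ?X)) + card (B ` (?X - A))"
    by (rule card_Un_le)
  also have "\<dots> \<le> card (P - ?X) + card (?X - A)"
    by (intro add_mono card_image_le) (use assms(1) finX in auto)
  also have "\<dots> = card P - card A"
    using card_Diff_subset[OF finX XP] card_Diff_subset[OF finA AX]
      card_mono[OF assms(1) XP] card_mono[OF finX AX] by simp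
  finally show ?thesis .
qed

lemma gen_pos_subset: "gen_pos S \<Longrightarrow> T \<subseteq> S \<Longrightarrow> gen_pos T"
  unfolding gen_pos_def by blast

definition well_separated :: "real \<Rightarrow> pt set \<Rightarrow> bool" where
  "well_separated g P \<longleftrightarrow>
     (\<forall>p\<in>P. \<forall>q\<in>P. p \<noteq> q \<longrightarrow> g \<le> \<bar>fst p - fst q\<bar> \<and> g \<le> \<bar>snd p - snd q\<bar>)"

lemma separation_exists:
  assumes "finite P" "gen_pos P"
  shows "\<exists>g>0. well_separated g P"
proof -
  define D where "D = (\<lambda>(p, q). min \<bar>fst p - fst q\<bar> \<bar>snd p - snd q\<bar>) ` {(p, q) \<in> P \<times> P. p \<noteq> q}"
  define g where "g = Min (insert 1 D)"
  have "{(p, q) \<in> P \<times> P. p \<noteq> q} \<subseteq> P \<times> P" by blast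
  hence finD: "finite (insert 1 D)" using assms(1) finite_subset unfolding D_def by blast
  have "\<forall>x \<in> insert 1 D. x > 0" using assms(2) unfolding D_def gen_pos_def by auto
  hence "g > 0" unfolding g_def using Min_in[OF finD] by blast
  moreover have "g \<le> \<bar>fst p - fst q\<bar> \<and> g \<le> \<bar>snd p - snd q\<bar>" if "p \<in> P" "q \<in> P" "p \<noteq> q" for p q
  proof -
    have "min \<bar>fst p - fst q\<bar> \<bar>snd p - snd q\<bar> \<in> insert 1 D" using that unfolding D_def by force
    hence "g \<le> min \<bar>fst p - fst q\<bar> \<bar>snd p - snd q\<bar>" unfolding g_def using Min_le[OF finD] by blast
    thus ?thesis by simp
  qed
  ultimately show ?thesis unfolding well_separated_def by blast
qed

lemma gen_pos_shifts:
  assumes P_sep: "well_separated g P" "2 * r < g"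
    and V_gp: "gen_pos V" and V_small: "\<And>v. v \<in> V \<Longrightarrow> \<bar>fst v\<bar> \<le> r \<and> \<bar>snd v\<bar> \<le> r"
  shows "gen_pos {shift v p | p v. p \<in> P \<and> v \<in> V}"
  unfolding gen_pos_def
proof (intro ballI impI)
  fix u w assume "u \<in> {shift v p | p v. p \<in> P \<and> v \<in> V}" "w \<in> {shift v p | p v. p \<in> P \<and> v \<in> V}"
    and "u \<noteq> w"
  then obtain p v p' v' where pv: "p \<in> P" "v \<in> V" "u = shift v p" "p' \<in> P" "v' \<in> V" "w = shift v' p'"
    by blast
  have coord: "\<pi> u \<noteq> \<pi> w" if \<pi>: "\<pi> = fst \<or> \<pi> = snd" for \<pi> :: "pt \<Rightarrow> real"
  proof
    assume eq: "\<pi> u = \<pi> w"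
    have \<pi>_shift: "\<pi> (shift x y) = \<pi> y + \<pi> x" for x y using \<pi> by (auto simp: shift_def)
    have diff: "\<pi> p - \<pi> p' = \<pi> v' - \<pi> v" using eq pv(3,6) \<pi>_shift by simp
    have "p = p'"
    proof (rule ccontr)
      assume "p \<noteq> p'"
      hence "g \<le> \<bar>\<pi> p - \<pi> p'\<bar>" using P_sep(1) pv(1,4) \<pi> unfolding well_separated_def by auto
      moreover have "\<bar>\<pi> v\<bar> \<le> r" "\<bar>\<pi> v'\<bar> \<le> r" using V_small[OF pv(2)] V_small[OF pv(5)] \<pi> by auto
      ultimately show False using diff P_sep(2) by linarith
    qed
    hence "\<pi> v = \<pi> v'" using diff by simp
    hence "v = v'" using V_gp pv(2,5) \<pi> unfolding gen_pos_def by auto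
    thus False using \<open>u \<noteq> w\<close> \<open>p = p'\<close> pv(3,6) by simp
  qed
  show "fst u \<noteq> fst w \<and> snd u \<noteq> snd w" using coord by blast
qed

text \<open>The five translation vectors used: the identity, forward/backward vectors for the
  north-east order and forward/backward vectors for the south-east order, all with
  distinct coordinates.\<close>

definition staircase_offsets :: "real \<Rightarrow> pt set" where
  "staircase_offsets d = {(0, 0), (d, d), (-4 * d, -4 * d), (2 * d, -2 * d), (-3 * d, 3 * d)}"

lemma gen_pos_staircase_shifts:
  assumes "well_separated (16 * d) P" "d > 0"
  shows "gen_pos {shift v p | p v. p \<in> P \<and> v \<in> staircase_offsets d}"
proof (rule gen_pos_shifts[where r = "4 * d"])
  show "well_separated (16 * d) P" "2 * (4 * d) < 16 * d" using assms by auto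
  show "gen_pos (staircase_offsets d)" using assms(2) unfolding staircase_offsets_def gen_pos_def by auto
  show "\<bar>fst v\<bar> \<le> 4 * d \<and> \<bar>snd v\<bar> \<le> 4 * d" if "v \<in> staircase_offsets d" for v
    using that assms(2) unfolding staircase_offsets_def by auto
qed

lemma staircase_offsets_between:
  assumes sep: "well_separated (16 * d) P" and d: "d > 0" and pq: "p \<in> P" "q \<in> P"
  shows "north_east p q \<Longrightarrow>
           strictly_between p q (shift (d, d) p) \<and> strictly_between p q (shift (-4 * d, -4 * d) q)"
    and "south_east p q \<Longrightarrow>
           strictly_between p q (shift (2 * d, -2 * d) p) \<and> strictly_between p q (shift (-3 * d, 3 * d) q)"
proof -
  have gap: "16 * d \<le> \<bar>fst p - fst q\<bar>" "16 * d \<le> \<bar>snd p - snd q\<bar>" if "fst p \<noteq> fst q"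
    using sep pq that unfolding well_separated_def by auto
  show "strictly_between p q (shift (d, d) p) \<and> strictly_between p q (shift (-4 * d, -4 * d) q)"
    if "north_east p q"
  proof
    have "16 * d \<le> fst q - fst p" "16 * d \<le> snd q - snd p" using gap that unfolding north_east_def by auto
    thus "strictly_between p q (shift (d, d) p)"
      using d by (intro shift_toward_between) (auto simp: zero_less_mult_iff mult_less_0_iff)
    have "strictly_between q p (shift (-4 * d, -4 * d) q)"
      using \<open>16 * d \<le> fst q - fst p\<close> \<open>16 * d \<le> snd q - snd p\<close> d
      by (intro shift_toward_between) (auto simp: zero_less_mult_iff mult_less_0_iff)
    thus "strictly_between p q (shift (-4 * d, -4 * d) q)" by (simp add: strictly_between_sym)
  qed
  show "strictly_between p q (shift (2 * d, -2 * d) p) \<and> strictly_between p q (shift (-3 * d, 3 * d) q)"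
    if "south_east p q"
  proof
    have "16 * d \<le> fst q - fst p" "16 * d \<le> snd p - snd q" using gap that unfolding south_east_def by auto
    thus "strictly_between p q (shift (2 * d, -2 * d) p)"
      using d by (intro shift_toward_between) (auto simp: zero_less_mult_iff mult_less_0_iff)
    have "strictly_between q p (shift (-3 * d, 3 * d) q)"
      using \<open>16 * d \<le> fst q - fst p\<close> \<open>16 * d \<le> snd p - snd q\<close> d
      by (intro shift_toward_between) (auto simp: zero_less_mult_iff mult_less_0_iff)
    thus "strictly_between p q (shift (-3 * d, 3 * d) q)" by (simp add: strictly_between_sym)
  qed
qed

definition staircase_witnesses :: "real \<Rightarrow> pt set \<Rightarrow> pt set \<Rightarrow> pt set \<Rightarrow> pt set" where
  "staircase_witnesses d P A C =
     (shift (d, d) ` (P - upset north_east P A) \<union> shift (-4 * d, -4 * d) ` (upset north_east P A - A))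
   \<union> (shift (2 * d, -2 * d) ` (P - upset south_east P C) \<union> shift (-3 * d, 3 * d) ` (upset south_east P C - C))"

lemma staircase_witnesses_card:
  assumes fin: "finite P" and "A \<subseteq> P" "C \<subseteq> P"
  shows "card (staircase_witnesses d P A C) + card A + card C \<le> 2 * card P"
proof -
  have "card (staircase_witnesses d P A C) \<le> (card P - card A) + (card P - card C)"
    unfolding staircase_witnesses_def
    by (rule order_trans[OF card_Un_le add_mono])
      (use relation_witnesses_card[OF fin assms(2)] relation_witnesses_card[OF fin assms(3)] in auto)
  moreover have "card A \<le> card P" "card C \<le> card P" using card_mono fin assms(2,3) by blast+
  ultimately show ?thesis by linarith
qed

lemma staircase_witnesses_gen_pos:
  assumes "well_separated (16 * d) P" "d > 0"
  shows "gen_pos (P \<union> staircase_witnesses d P A C)"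
proof (rule gen_pos_subset[OF gen_pos_staircase_shifts[OF assms]])
  have "p = shift (0, 0) p" for p by (simp add: shift_def)
  thus "P \<union> staircase_witnesses d P A C \<subseteq> {shift v p | p v. p \<in> P \<and> v \<in> staircase_offsets d}"
    unfolding staircase_witnesses_def staircase_offsets_def upset_def by blast
qed

text \<open>Every pair of points of P is related by one of the two orders, so the covering step
  yields a witness strictly between them.\<close>

lemma staircase_witnesses_between:
  assumes gp: "gen_pos P" and sep: "well_separated (16 * d) P" and d: "d > 0"
    and A_anti: "antichain_wrt north_east A" and C_chain: "chain_wrt north_east C"
    and pq: "p \<in> P" "q \<in> P" "p \<noteq> q"
  shows "\<exists>w \<in> staircase_witnesses d P A C. strictly_between p q w"
proof -
  have left_to_right: "\<exists>w \<in> staircase_witnesses d P A C. strictly_between p q w"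
    if pq: "p \<in> P" "q \<in> P" "fst p < fst q" for p q
  proof -
    have "snd p \<noteq> snd q" using gp pq unfolding gen_pos_def by force
    hence "north_east p q \<or> south_east p q" using pq(3) unfolding north_east_def south_east_def by auto
    moreover have "north_east p q \<Longrightarrow> \<exists>w \<in> shift (d, d) ` (P - upset north_east P A)
        \<union> shift (-4 * d, -4 * d) ` (upset north_east P A - A). strictly_between p q w"
      using staircase_offsets_between(1)[OF sep d]
      by (intro relation_witnesses_cover[OF transp_north_east A_anti _ _ pq(1,2)]) blast+
    moreover have "south_east p q \<Longrightarrow> \<exists>w \<in> shift (2 * d, -2 * d) ` (P - upset south_east P C)
        \<union> shift (-3 * d, 3 * d) ` (upset south_east P C - C). strictly_between p q w"
      using staircase_offsets_between(2)[OF sep d] ne_chain_is_se_antichain[OF C_chain]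
      by (intro relation_witnesses_cover[OF transp_south_east _ _ _ pq(1,2)]) blast+
    ultimately show ?thesis unfolding staircase_witnesses_def by blast
  qed
  have "fst p < fst q \<or> fst q < fst p" using gp pq unfolding gen_pos_def by force
  thus ?thesis using left_to_right pq(1,2) strictly_between_sym by blast
qed

lemma witness_set_from_antichain_and_chain:
  assumes fin: "finite P" and gp: "gen_pos P" and AP: "A \<subseteq> P" and CP: "C \<subseteq> P"
    and A_anti: "antichain_wrt north_east A" and C_chain: "chain_wrt north_east C"
  shows "\<exists>W. is_witness_set P W \<and> card W + card A + card C \<le> 2 * card P"
proof -
  obtain g where "g > 0" "well_separated g P" using separation_exists[OF fin gp] by blast
  then obtain d where d: "d > 0" and sep: "well_separated (16 * d) P" by (intro that[of "g / 16"]) auto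
  have "is_witness_set P (staircase_witnesses d P A C)"
  proof (rule between_witnesses_suffice)
    show "finite (staircase_witnesses d P A C)"
      unfolding staircase_witnesses_def upset_def using fin by simp
    show "gen_pos (P \<union> staircase_witnesses d P A C)" by (rule staircase_witnesses_gen_pos[OF sep d])
  qed (rule staircase_witnesses_between[OF gp sep d A_anti C_chain])
  thus ?thesis using staircase_witnesses_card[OF fin AP CP] by blast
qed

lemma st_S_le_witness: "is_witness_set P W \<Longrightarrow> st_S P \<le> card W"
  unfolding st_S_def by (rule Least_le) blast

lemma witness_set_exists: "finite P \<Longrightarrow> gen_pos P \<Longrightarrow> \<exists>W. is_witness_set P W"
  using witness_set_from_antichain_and_chain[of P "{}" "{}"]
  unfolding antichain_wrt_def chain_wrt_def by blast

lemma st_S_attained: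
  assumes "finite P" "gen_pos P"
  shows "\<exists>W. is_witness_set P W \<and> card W = st_S P"
  unfolding st_S_def by (rule LeastI_ex) (use witness_set_exists[OF assms] in blast)

text \<open>With the product bound |P| <= |A| |C| <= (|A| + |C|)^2 this gives the upper bound.\<close>

lemma st_S_upper:
  assumes "finite P" "gen_pos P"
  shows "real (st_S P) \<le> 2 * real (card P) - sqrt (real (card P))"
proof -
  obtain A C where AC: "A \<subseteq> P" "C \<subseteq> P" "antichain_wrt north_east A" "chain_wrt north_east C"
      "card P \<le> card A * card C"
    using antichain_chain_product[OF transp_north_east _ assms(1), of fst]
    unfolding north_east_def by blast
  obtain W where W: "is_witness_set P W" "card W + card A + card C \<le> 2 * card P"
    using witness_set_from_antichain_and_chain[OF assms AC(1-4)] by blast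
  have "real (card P) \<le> (real (card A) + real (card C))\<^sup>2"
  proof -
    have "real (card P) \<le> real (card A) * real (card C)" using AC(5) by (metis of_nat_le_iff of_nat_mult)
    also have "\<dots> \<le> (real (card A) + real (card C))\<^sup>2" by (simp add: power2_eq_square algebra_simps)
    finally show ?thesis .
  qed
  hence "sqrt (real (card P)) \<le> real (card A) + real (card C)" by (simp add: real_le_lsqrt)
  moreover have "real (card W) + real (card A) + real (card C) \<le> 2 * real (card P)"
    using W(2) by (metis of_nat_add of_nat_le_iff of_nat_mult of_nat_numeral)
  ultimately show ?thesis using st_S_le_witness[OF W(1)] by linarith
qed

section \<open>Lower bound: pairwise disjoint squares\<close>

lemma witnesses_ge_disjoint_squares:
  fixes a b s :: "'i \<Rightarrow> real"
  assumes W: "is_witness_set P W"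
    and spanned: "\<And>i. i \<in> I \<Longrightarrow> s i > 0 \<and> (\<exists>p\<in>P. \<exists>q\<in>P. p \<noteq> q \<and>
                     p \<in> sq_boundary (a i) (b i) (s i) \<and> q \<in> sq_boundary (a i) (b i) (s i))"
    and disjoint: "\<And>i j. i \<in> I \<Longrightarrow> j \<in> I \<Longrightarrow> i \<noteq> j \<Longrightarrow>
                     sq_interior (a i) (b i) (s i) \<inter> sq_interior (a j) (b j) (s j) = {}"
  shows "card I \<le> card W"
proof -
  have "\<forall>i\<in>I. \<exists>w. w \<in> W \<and> w \<in> sq_interior (a i) (b i) (s i)"
  proof
    fix i assume "i \<in> I"
    with spanned obtain p q where "p \<in> P" "q \<in> P" "p \<noteq> q" "s i > 0"
      "p \<in> sq_boundary (a i) (b i) (s i)" "q \<in> sq_boundary (a i) (b i) (s i)" by blast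
    thus "\<exists>w. w \<in> W \<and> w \<in> sq_interior (a i) (b i) (s i)"
      using W unfolding is_witness_set_def by blast
  qed
  then obtain f where f: "\<And>i. i \<in> I \<Longrightarrow> f i \<in> W \<and> f i \<in> sq_interior (a i) (b i) (s i)"
    by metis
  have "inj_on f I"
  proof (rule inj_onI, rule ccontr)
    fix i j assume "i \<in> I" "j \<in> I" "f i = f j" "i \<noteq> j"
    hence "f i \<in> sq_interior (a i) (b i) (s i) \<inter> sq_interior (a j) (b j) (s j)"
      using f[OF \<open>i \<in> I\<close>] f[OF \<open>j \<in> I\<close>] by simp
    thus False using disjoint[OF \<open>i \<in> I\<close> \<open>j \<in> I\<close> \<open>i \<noteq> j\<close>] by simp
  qed
  moreover have "f ` I \<subseteq> W" using f by blast
  moreover have "finite W" using W unfolding is_witness_set_def by simp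
  ultimately show ?thesis by (rule card_inj_on_le)
qed

definition lower_diag :: "nat \<Rightarrow> pt" where
  "lower_diag i = (real i, - real i)"

definition upper_diag :: "nat \<Rightarrow> pt" where
  "upper_diag i = (real i + 3/2, - real i + 3/2)"

definition two_diagonals :: "nat \<Rightarrow> pt set" where
  "two_diagonals n = lower_diag ` {..< (n + 1) div 2} \<union> upper_diag ` {..< n div 2}"

lemma real_ne_plus_three_halves: "real (i::nat) \<noteq> real j + 3/2"
proof
  assume "real i = real j + 3/2"
  hence "real (2 * i) = real (2 * j + 3)" by simp
  hence "2 * i = 2 * j + 3" by (simp only: of_nat_eq_iff)
  thus False by presburger
qed

lemma two_diagonals_facts:
  "finite (two_diagonals n)" "card (two_diagonals n) = n" "gen_pos (two_diagonals n)"
proof -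
  show "finite (two_diagonals n)" unfolding two_diagonals_def by simp
  have "inj lower_diag" "inj upper_diag" unfolding inj_def lower_diag_def upper_diag_def by auto
  moreover have "lower_diag ` {..< (n + 1) div 2} \<inter> upper_diag ` {..< n div 2} = {}"
    using real_ne_plus_three_halves unfolding lower_diag_def upper_diag_def by auto
  ultimately have "card (two_diagonals n) = (n + 1) div 2 + n div 2"
    unfolding two_diagonals_def by (simp add: card_Un_disjoint card_image inj_on_subset)
  thus "card (two_diagonals n) = n" by presburger
  have lower_upper: "fst (lower_diag i) \<noteq> fst (upper_diag j) \<and> snd (lower_diag i) \<noteq> snd (upper_diag j)"
    for i j using real_ne_plus_three_halves[of i j] real_ne_plus_three_halves[of j i]
    unfolding lower_diag_def upper_diag_def by auto
  have lower_lower: "fst (lower_diag i) \<noteq> fst (lower_diag j) \<and> snd (lower_diag i) \<noteq> snd (lower_diag j)"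
    and upper_upper: "fst (upper_diag i) \<noteq> fst (upper_diag j) \<and> snd (upper_diag i) \<noteq> snd (upper_diag j)"
    if "i \<noteq> j" for i j using that unfolding lower_diag_def upper_diag_def by auto
  have "fst u \<noteq> fst v \<and> snd u \<noteq> snd v"
    if "u \<in> two_diagonals n" "v \<in> two_diagonals n" "u \<noteq> v" for u v
    using that lower_lower upper_upper lower_upper lower_upper[THEN conjunct1, THEN not_sym]
      lower_upper[THEN conjunct2, THEN not_sym]
    unfolding two_diagonals_def by (elim UnE imageE) metis+
  thus "gen_pos (two_diagonals n)" unfolding gen_pos_def by blast
qed

text \<open>The squares: type 0 spans consecutive lower points, type 1 consecutive upper points,
  type 2 spans the lower and the upper point with the same even index.\<close>

definition square_x :: "nat \<times> nat \<Rightarrow> real" where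
  "square_x = (\<lambda>(t, i). if t = 0 then real i else if t = 1 then real i + 3/2 else 2 * real i)"

definition square_y :: "nat \<times> nat \<Rightarrow> real" where
  "square_y = (\<lambda>(t, i). if t = 0 then - real i - 1 else if t = 1 then - real i + 1/2 else - 2 * real i)"

definition square_side :: "nat \<times> nat \<Rightarrow> real" where
  "square_side = (\<lambda>(t, i). if t = 2 then 3/2 else 1)"

text \<open>The squares used for n points: indices (t, i) for which both spanning points exist.\<close>

definition square_index :: "nat \<Rightarrow> (nat \<times> nat) set" where
  "square_index n = {0} \<times> {..< (n + 1) div 2 - 1} \<union> {1} \<times> {..< n div 2 - 1}
                     \<union> {2} \<times> {..< (n div 2 + 1) div 2}"

lemma on_sq_boundary:
  "a \<le> x \<Longrightarrow> x \<le> a + s \<Longrightarrow> b \<le> y \<Longrightarrow> y \<le> b + s \<Longrightarrow> x = a \<or> x = a + s \<or> y = b \<or> y = b + s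
     \<Longrightarrow> (x, y) \<in> sq_boundary a b s"
  unfolding sq_boundary_def sq_closed_def sq_interior_def by auto

lemma square_spanned:
  assumes "k \<in> square_index n"
  shows "\<exists>p\<in>two_diagonals n. \<exists>q\<in>two_diagonals n. p \<noteq> q \<and>
           p \<in> sq_boundary (square_x k) (square_y k) (square_side k) \<and>
           q \<in> sq_boundary (square_x k) (square_y k) (square_side k)"
proof -
  have "n div 2 \<le> (n + 1) div 2" by simp
  then consider (lower) i where "k = (0, i)" "i + 1 < (n + 1) div 2"
    | (upper) i where "k = (1, i)" "i + 1 < n div 2"
    | (between) i where "k = (2, i)" "2 * i < n div 2" "2 * i < (n + 1) div 2"
    using assms unfolding square_index_def by fastforce
  then show ?thesis
  proof cases
    case (lower i)
    hence "lower_diag i \<in> two_diagonals n" "lower_diag (i + 1) \<in> two_diagonals n"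
      unfolding two_diagonals_def by auto
    moreover have "lower_diag i \<noteq> lower_diag (i + 1)" unfolding lower_diag_def by simp
    moreover have "lower_diag i \<in> sq_boundary (square_x k) (square_y k) (square_side k)"
      "lower_diag (i + 1) \<in> sq_boundary (square_x k) (square_y k) (square_side k)"
      unfolding lower_diag_def square_x_def square_y_def square_side_def lower(1)
      by (auto intro!: on_sq_boundary)
    ultimately show ?thesis by blast
  next
    case (upper i)
    hence "upper_diag i \<in> two_diagonals n" "upper_diag (i + 1) \<in> two_diagonals n"
      unfolding two_diagonals_def by auto
    moreover have "upper_diag i \<noteq> upper_diag (i + 1)" unfolding upper_diag_def by simp
    moreover have "upper_diag i \<in> sq_boundary (square_x k) (square_y k) (square_side k)"
      "upper_diag (i + 1) \<in> sq_boundary (square_x k) (square_y k) (square_side k)"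
      unfolding upper_diag_def square_x_def square_y_def square_side_def upper(1)
      by (auto intro!: on_sq_boundary)
    ultimately show ?thesis by blast
  next
    case (between i)
    hence "lower_diag (2 * i) \<in> two_diagonals n" "upper_diag (2 * i) \<in> two_diagonals n"
      unfolding two_diagonals_def by auto
    moreover have "lower_diag (2 * i) \<noteq> upper_diag (2 * i)"
      unfolding lower_diag_def upper_diag_def by simp
    moreover have "lower_diag (2 * i) \<in> sq_boundary (square_x k) (square_y k) (square_side k)"
      "upper_diag (2 * i) \<in> sq_boundary (square_x k) (square_y k) (square_side k)"
      unfolding lower_diag_def upper_diag_def square_x_def square_y_def square_side_def between(1)
      by (auto intro!: on_sq_boundary)
    ultimately show ?thesis by blast
  qed
qed

definition squares_apart :: "nat \<times> nat \<Rightarrow> nat \<times> nat \<Rightarrow> bool" where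
  "squares_apart k k' \<longleftrightarrow>
     square_x k + square_side k \<le> square_x k' \<or> square_x k' + square_side k' \<le> square_x k \<or>
     square_y k + square_side k \<le> square_y k' \<or> square_y k' + square_side k' \<le> square_y k"

lemma separated_interiors_disjoint:
  "a + s \<le> a' \<or> a' + s' \<le> a \<or> b + s \<le> b' \<or> b' + s' \<le> b \<Longrightarrow>
     sq_interior a b s \<inter> sq_interior a' b' s' = {}"
  unfolding sq_interior_def by auto

lemma real_nat_gap: "(m::nat) < k \<Longrightarrow> real m + 1 \<le> real k"
  using of_nat_le_iff[of "Suc m" k] by simp

text \<open>Distinct squares are apart; by symmetry it suffices to compare types t <= t'.\<close>

lemma squares_apart_ordered:
  assumes "t \<le> t'" "t' \<le> 2" "(t, i) \<noteq> (t', j)"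
  shows "squares_apart (t, i) (t', j)"
proof -
  have "t \<noteq> t' \<or> i \<noteq> j" using assms(3) by simp
  hence "t = t' \<and> i < j \<or> t = t' \<and> j < i \<or> t = 0 \<and> t' = 1 \<or> t = 0 \<and> t' = 2 \<or> t = 1 \<and> t' = 2"
    using assms(1,2) by presburger
  then consider "t = t'" "i < j" | "t = t'" "j < i" | "t = 0" "t' = 1" | "t = 0" "t' = 2" | "t = 1" "t' = 2"
    by blast
  then show ?thesis
  proof cases
    case 1
    thus ?thesis using real_nat_gap[OF \<open>i < j\<close>]
      unfolding squares_apart_def square_x_def square_side_def by auto
  next
    case 2
    thus ?thesis using real_nat_gap[OF \<open>j < i\<close>]
      unfolding squares_apart_def square_x_def square_side_def by auto
  next
    case 3
    have "j < i \<or> i \<le> j" by auto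
    thus ?thesis using 3 real_nat_gap[of j i]
      unfolding squares_apart_def square_x_def square_y_def square_side_def by auto
  next
    case 4
    have "i < 2 * j \<or> 2 * real j \<le> real i" by (metis not_less of_nat_le_iff of_nat_mult of_nat_numeral)
    thus ?thesis using 4 real_nat_gap[of i "2 * j"]
      unfolding squares_apart_def square_x_def square_y_def square_side_def by auto
  next
    case 5
    have "i < 2 * j \<or> 2 * real j \<le> real i" by (metis not_less of_nat_le_iff of_nat_mult of_nat_numeral)
    thus ?thesis using 5 real_nat_gap[of i "2 * j"]
      unfolding squares_apart_def square_x_def square_y_def square_side_def by auto
  qed
qed

lemma squares_apart_if_distinct:
  assumes "fst k \<le> 2" "fst k' \<le> 2" "k \<noteq> k'"
  shows "squares_apart k k'"
proof -
  obtain t i t' j where k: "k = (t, i)" "k' = (t', j)" by (cases k, cases k')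
  have "squares_apart k k' \<longleftrightarrow> squares_apart k' k" unfolding squares_apart_def by auto
  thus ?thesis using squares_apart_ordered[of t t' i j] squares_apart_ordered[of t' t j i] assms k
    by (cases "t \<le> t'") auto
qed

text \<open>There are about (n/2) + (n/2) + (n/4) = 5n/4 such squares.\<close>

lemma card_square_index: "5/4 * real n - 9/4 \<le> real (card (square_index n))"
proof -
  define a where "a = (n + 1) div 2"
  define b where "b = n div 2"
  have "card (square_index n) = (a - 1) + (b - 1) + (b + 1) div 2"
    unfolding square_index_def a_def b_def
    by (subst card_Un_disjoint, auto)+
  moreover have "a + b = n" "n \<le> 2 * b + 1" "b \<le> 2 * ((b + 1) div 2)"
    unfolding a_def b_def by presburger+
  ultimately show ?thesis by linarith
qed

lemma st_S_two_diagonals: "5/4 * real n - 9/4 \<le> real (st_S (two_diagonals n))"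
proof -
  obtain W where W: "is_witness_set (two_diagonals n) W" "card W = st_S (two_diagonals n)"
    using st_S_attained two_diagonals_facts by blast
  have "card (square_index n) \<le> card W"
  proof (rule witnesses_ge_disjoint_squares[OF W(1)])
    fix k assume "k \<in> square_index n"
    thus "square_side k > 0 \<and> (\<exists>p\<in>two_diagonals n. \<exists>q\<in>two_diagonals n. p \<noteq> q \<and>
            p \<in> sq_boundary (square_x k) (square_y k) (square_side k) \<and>
            q \<in> sq_boundary (square_x k) (square_y k) (square_side k))"
      using square_spanned unfolding square_side_def by (auto split: prod.split)
  next
    fix k k' assume "k \<in> square_index n" "k' \<in> square_index n" "k \<noteq> k'"
    hence "squares_apart k k'" by (intro squares_apart_if_distinct) (auto simp: square_index_def)
    thus "sq_interior (square_x k) (square_y k) (square_side k) \<inter>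
          sq_interior (square_x k') (square_y k') (square_side k') = {}"
      unfolding squares_apart_def by (rule separated_interiors_disjoint)
  qed
  thus ?thesis using card_square_index[of n] W(2) by linarith
qed

lemma st_S_n_attained_and_ge:
  shows "\<exists>P. finite P \<and> card P = n \<and> gen_pos P \<and> st_S_n n = st_S P"
    and "st_S (two_diagonals n) \<le> st_S_n n"
proof -
  define S where "S = {st_S P | P. finite P \<and> card P = n \<and> gen_pos P}"
  have "S \<subseteq> {..2 * n}"
  proof
    fix x assume "x \<in> S"
    then obtain P where P: "x = st_S P" "finite P" "card P = n" "gen_pos P" unfolding S_def by blast
    have "real x \<le> 2 * real n - sqrt (real n)" using st_S_upper[OF P(2,4)] P(1,3) by simp
    moreover have "0 \<le> sqrt (real n)" by simp
    ultimately have "real x \<le> 2 * real n" by linarith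
    hence "real x \<le> real (2 * n)" by simp
    thus "x \<in> {..2 * n}" by (simp only: of_nat_le_iff atMost_iff)
  qed
  hence fin: "finite S" by (rule finite_subset) simp
  have diag: "st_S (two_diagonals n) \<in> S" unfolding S_def using two_diagonals_facts by blast
  have max: "st_S_n n = Max S" unfolding st_S_n_def S_def ..
  show "\<exists>P. finite P \<and> card P = n \<and> gen_pos P \<and> st_S_n n = st_S P"
    using Max_in[OF fin] diag unfolding max S_def by blast
  show "st_S (two_diagonals n) \<le> st_S_n n" unfolding max using fin diag by (rule Max_ge)
qed

theorem mainTheorem17:
  shows "\<exists>c::real. c > 0 \<and> (\<forall>n::nat. n \<ge> 1 \<longrightarrow>
           (5/4) * real n - c * sqrt (real n) \<le> real (st_S_n n) \<and>
           real (st_S_n n) \<le> 2 * real n - sqrt (real n))"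
proof (intro exI[of _ 3] conjI allI impI)
  show "(0::real) < 3" by simp
  fix n :: nat assume "n \<ge> 1"
  obtain P where P: "finite P" "card P = n" "gen_pos P" "st_S_n n = st_S P"
    using st_S_n_attained_and_ge(1) by blast
  show "real (st_S_n n) \<le> 2 * real n - sqrt (real n)" using st_S_upper[OF P(1,3)] P(2,4) by simp
  have "5/4 * real n - 9/4 \<le> real (st_S_n n)"
    using st_S_two_diagonals[of n] st_S_n_attained_and_ge(2)[of n] by linarith
  moreover have "1 \<le> sqrt (real n)" using \<open>n \<ge> 1\<close> by simp
  ultimately show "5/4 * real n - 3 * sqrt (real n) \<le> real (st_S_n n)" by linarith
qed

end
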